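(* Fix an integer $D\ge 2$ and parameters $0<\lambda_1<\mu_1$, $\pi_S\in(0,1]$, and let $a,b$ be as in the context. For each $N$ for which there is at least one rooted plane tree with $N$ vertices and all out-degrees at most $D$, let $\mathbf P_N$ be the law of the empirical out-degree vector $$\Big(\tfrac{\chi_0(T)}{N},\tfrac{\chi_1(T)}{N},\dots,\tfrac{\chi_D(T)}{N}\Big)\in[0,1]^{D+1},$$ where $T$ is drawn from the tree-marginal $\Pi(T)=a^{|V|}b^{|V|-1}$ conditioned on $T$ having $N$ vertices and all out-degrees $\le D$. Equivalently, $T$ is uniformly distributed over such plane trees. Then there is a sequence of probability measures $(Q_N)_{N}$ on $[0,1]^{D+1}\times\mathcal M_D$ with marginals $Q_N^{(1)}$ and $Q_N^{(2)}$ such that: 1. $Q_N^{(1)}=\mathbf P_N$ for every $N$; 2. $Q_N\big\{(x,y): \sum_{k=0}^D|x_k-y_k|>2/N\big\}=0$ for every $N$; 3. $(Q_N^{(2)})_N$ satisfies a large deviation principle on $\mathcal M_D$ with speed $N$ and rate function $$I(p)=J(p)-\min_{q\in\mathcal M_D}J(q),\qquad J(p)=\log(a^{-1})+\log(b^{-1})+\sum_{k=0}^D p_k\log p_k .$$ Here $0\log 0=0$. The LDP means: for every closed $C\subseteq\mathcal M_D$, $\limsup_N \frac1N\log Q_N^{(2)}(C)\le-\inf_{p\in C}I(p)$, and for every open $O\subseteq\mathcal M_D$, $\liminf_N\frac1N\log Q_N^{(2)}(O)\ge-\inf_{p\in O}I(p)$.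
   Context: A rooted plane tree is a finite rooted tree in which the children of each vertex are linearly ordered. The out-degree $|c(v)|$ of a vertex $v$ is its number of children. For a tree $T$, $\chi_k(T)$ denotes the number of vertices of out-degree $k$. Set $$a=\frac{\mu_1-\lambda_1}{\mu_1-\lambda_1(1-\pi_S)},\qquad b=\frac{\lambda_1\pi_S}{\mu_1-\lambda_1(1-\pi_S)}.$$ The set $\mathcal M_D$ is $\{p=(p_0,\dots,p_D)\in[0,1]^{D+1}:\sum_{k=0}^D p_k=1,\ \sum_{k=1}^D kp_k=1\}$, with the metric induced from $\mathbb R^{D+1}$. In the TKF91 Structure Tree model, the weight of a rooted plane tree $T=(V,E)$ is $\Pi(T)=a^{|V|}b^{|V|-1}$. *)

theory Defs
  imports "HOL-Probability.Probability"
begin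

datatype ptree = Node "ptree list"

fun nverts :: "ptree \<Rightarrow> nat" where
  "nverts (Node ts) = 1 + sum_list (map nverts ts)"

fun chi :: "nat \<Rightarrow> ptree \<Rightarrow> nat" where
  "chi k (Node ts) = (if length ts = k then 1 else 0) + sum_list (map (chi k) ts)"

fun deg_le :: "nat \<Rightarrow> ptree \<Rightarrow> bool" where
  "deg_le D (Node ts) = (length ts \<le> D \<and> (\<forall>t\<in>set ts. deg_le D t))"

definition trees :: "nat \<Rightarrow> nat \<Rightarrow> ptree set" where
  "trees N D = {T. nverts T = N \<and> deg_le D T}"

text \<open>Vectors in R^(D+1) are encoded as functions nat => real, indices 0..D, zero beyond D.\<close>
definition cube :: "nat \<Rightarrow> (nat \<Rightarrow> real) set" where
  "cube D = {x. (\<forall>k\<le>D. 0 \<le> x k \<and> x k \<le> 1) \<and> (\<forall>k>D. x k = 0)}"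

definition MD :: "nat \<Rightarrow> (nat \<Rightarrow> real) set" where
  "MD D = {p. (\<forall>k\<le>D. 0 \<le> p k \<and> p k \<le> 1) \<and> (\<forall>k>D. p k = 0)
              \<and> (\<Sum>k\<le>D. p k) = 1 \<and> (\<Sum>k=1..D. real k * p k) = 1}"

definition emp_deg :: "nat \<Rightarrow> nat \<Rightarrow> ptree \<Rightarrow> (nat \<Rightarrow> real)" where
  "emp_deg D N T = (\<lambda>k. if k \<le> D then real (chi k T) / real N else 0)"

text \<open>Law P_N of the empirical out-degree vector of a uniform tree from trees N D
  (equivalently, the Pi-weighted tree conditioned on N vertices and out-degrees \<le> D,
   since Pi depends only on the number of vertices).\<close>
definition PN :: "nat \<Rightarrow> nat \<Rightarrow> (nat \<Rightarrow> real) measure" where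
  "PN D N = distr (measure_pmf (pmf_of_set (trees N D))) borel (emp_deg D N)"

definition param_a :: "real \<Rightarrow> real \<Rightarrow> real \<Rightarrow> real" where
  "param_a lam1 mu1 piS = (mu1 - lam1) / (mu1 - lam1 * (1 - piS))"

definition param_b :: "real \<Rightarrow> real \<Rightarrow> real \<Rightarrow> real" where
  "param_b lam1 mu1 piS = (lam1 * piS) / (mu1 - lam1 * (1 - piS))"

definition xlogx :: "real \<Rightarrow> real" where
  "xlogx x = (if x = 0 then 0 else x * ln x)"

definition Jfun :: "real \<Rightarrow> real \<Rightarrow> nat \<Rightarrow> (nat \<Rightarrow> real) \<Rightarrow> real" where
  "Jfun a b D p = ln (1 / a) + ln (1 / b) + (\<Sum>k\<le>D. xlogx (p k))"

definition Ifun :: "real \<Rightarrow> real \<Rightarrow> nat \<Rightarrow> (nat \<Rightarrow> real) \<Rightarrow> real" where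
  "Ifun a b D p = Jfun a b D p - (INF q\<in>MD D. Jfun a b D q)"

definition eln :: "real \<Rightarrow> ereal" where
  "eln x = (if x = 0 then - \<infinity> else ereal (ln x))"

end

theory Submission
  imports Defs "HOL-Combinatorics.Multiset_Permutations" "HOL-Real_Asymp.Real_Asymp"
begin

text \<open>
  Encode a plane tree by its preorder word of out-degrees. By the cycle lemma every word with
  letter counts \<open>c\<close> and \<open>\<Sum>c\<^sub>k = \<Sum>k c\<^sub>k + 1 = N\<close> has a rotation encoding a tree, so the
  number of trees with out-degree counts \<open>c\<close> lies between \<open>1/N\<close> times and once the multinomial
  coefficient \<open>N!/\<Prod>c\<^sub>k!\<close>, which by Stirling is \<open>exp (N H(c/N))\<close> up to factors polynomial in \<open>N\<close>.
  Since there are only polynomially many count vectors, the method of types gives the large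
  deviation principle with rate \<open>sup H - H\<close>; the constants \<open>log (1/a) + log (1/b)\<close> cancel in \<open>I\<close>.
  The empirical vector itself satisfies \<open>\<Sum> k p\<^sub>k = 1 - 1/N\<close>, so it is coupled with the vector
  obtained by moving one vertex from out-degree 0 to out-degree 1, which lies in \<open>\<M>\<^sub>D\<close> and is at
  \<open>\<ell>\<^sup>1\<close>-distance \<open>2/N\<close>.
\<close>

section \<open>Preorder degree words\<close>

fun degree_word :: "ptree \<Rightarrow> nat list" where
  "degree_word (Node ts) = length ts # concat (map degree_word ts)"

lemma length_degree_word: "length (degree_word t) = nverts t"
proof (induction t)
  case (Node ts)
  then have "length (concat (map degree_word ts)) = sum_list (map nverts ts)"
    by (induction ts) auto
  then show ?case by simp
qed

lemma count_degree_word: "count (mset (degree_word t)) k = chi k t"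
proof (induction t)
  case (Node ts)
  then have "count (mset (concat (map degree_word ts))) k = sum_list (map (chi k) ts)"
    by (induction ts) auto
  then show ?case by simp
qed

lemma deg_le_iff_degree_word: "deg_le D t \<longleftrightarrow> (\<forall>x\<in>set (degree_word t). x \<le> D)"
  by (induction t) auto

lemma sum_list_degree_word: "sum_list (degree_word t) + 1 = nverts t"
proof (induction t)
  case (Node ts)
  then have "sum_list (concat (map degree_word ts)) + length ts = sum_list (map nverts ts)"
  proof (induction ts)
    case (Cons t ts)
    then have "sum_list (degree_word t) + 1 = nverts t"
      and "sum_list (concat (map degree_word ts)) + length ts = sum_list (map nverts ts)"
      by auto
    then show ?case by simp
  qed simp
  then show ?case by simp
qed

lemma degree_words_append_eq:
  assumes "\<forall>t\<in>set ts. \<forall>t' r r'. degree_word t @ r = degree_word t' @ r' \<longrightarrow> t = t' \<and> r = r'"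
    and "length ts = length ts'"
    and "concat (map degree_word ts) @ r = concat (map degree_word ts') @ r'"
  shows "ts = ts' \<and> r = r'"
  using assms
proof (induction ts arbitrary: ts' r r')
  case (Cons a ts)
  obtain b bs where ts': "ts' = b # bs" using Cons.prems(2) by (cases ts') simp_all
  with Cons.prems(3) have eq: "degree_word a @ concat (map degree_word ts) @ r =
      degree_word b @ concat (map degree_word bs) @ r'"
    by simp
  from Cons.prems(1) have "\<And>t' r r'. degree_word a @ r = degree_word t' @ r' \<Longrightarrow> a = t' \<and> r = r'"
    by simp
  from this[OF eq] have ab: "a = b" and rest: "concat (map degree_word ts) @ r = concat (map degree_word bs) @ r'"
    by (rule conjunct1, rule conjunct2)
  moreover have "\<forall>t\<in>set ts. \<forall>t' r r'. degree_word t @ r = degree_word t' @ r' \<longrightarrow> t = t' \<and> r = r'"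
    using Cons.prems(1) by (meson list.set_intros(2))
  moreover have "length ts = length bs" using Cons.prems(2) ts' by simp
  ultimately have "ts = bs \<and> r = r'" using Cons.IH rest by blast
  with ab ts' show ?case by simp
qed simp

lemma degree_word_append_eq: "degree_word t @ r = degree_word t' @ r' \<Longrightarrow> t = t' \<and> r = r'"
proof (induction t arbitrary: t' r r')
  case (Node ts)
  obtain ts' where t': "t' = Node ts'" by (cases t')
  with Node.prems have "length ts = length ts'"
    and "concat (map degree_word ts) @ r = concat (map degree_word ts') @ r'"
    by simp_all
  with Node.IH have "ts = ts' \<and> r = r'"
    by (intro degree_words_append_eq) blast+
  with t' show ?case by simp
qed

lemma inj_degree_word: "inj degree_word"
  by (rule injI) (use degree_word_append_eq[of _ "[]" _ "[]"] in simp)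

definition excess :: "nat list \<Rightarrow> int" where
  "excess w = (\<Sum>x\<leftarrow>w. int x - 1)"

lemma excess_simps [simp]:
  "excess [] = 0" "excess (x # w) = int x - 1 + excess w" "excess (u @ v) = excess u + excess v"
  by (auto simp: excess_def)

lemma excess_eq: "excess w = int (sum_list w) - int (length w)"
  by (induction w) auto

text \<open>
  Decoding a word as a forest of \<open>k\<close> trees: \<open>k + excess\<close> counts the trees still to be read, so
  it stays positive on proper prefixes and vanishes at the end.
\<close>
lemma exists_forest_with_degree_word:
  assumes "\<forall>j<length w. 0 < int k + excess (take j w)" and "int k + excess w = 0"
  shows "\<exists>ts. length ts = k \<and> concat (map degree_word ts) = w"
  using assms
proof (induction w arbitrary: k)
  case Nil
  then show ?case by simp
next
  case (Cons d w)
  from Cons.prems(1)[rule_format, of 0] have k: "k \<ge> 1" by simp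
  define k' where "k' = k - 1 + d"
  have ik: "int k' = int k - 1 + int d" using k by (simp add: k'_def)
  have "\<forall>j<length w. 0 < int k' + excess (take j w)"
  proof (intro allI impI)
    fix j assume "j < length w"
    then have "0 < int k + excess (take (Suc j) (d # w))" using Cons.prems(1) by auto
    then show "0 < int k' + excess (take j w)" using ik by simp
  qed
  moreover have "int k' + excess w = 0" using Cons.prems(2) ik by simp
  ultimately obtain ts where ts: "length ts = k'" "concat (map degree_word ts) = w"
    using Cons.IH by blast
  have d: "d \<le> length ts" using ts k by (simp add: k'_def)
  have "concat (map degree_word (Node (take d ts) # drop d ts)) =
      d # concat (map degree_word (take d ts)) @ concat (map degree_word (drop d ts))"
    using d by simp
  also have "\<dots> = d # concat (map degree_word ts)"
    by (metis append_take_drop_id concat_append map_append)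
  finally show ?case
    using ts d k by (intro exI[of _ "Node (take d ts) # drop d ts"]) (simp add: k'_def)
qed

lemma obtain_first_argmin:
  fixes S :: "nat \<Rightarrow> 'a::linorder"
  assumes "N \<ge> 1"
  obtains j where "j < N" and "\<And>i. i < N \<Longrightarrow> S j \<le> S i" and "\<And>i. i < j \<Longrightarrow> S j < S i"
proof -
  define P where "P j \<longleftrightarrow> j < N \<and> (\<forall>i<N. S j \<le> S i)" for j
  have fin: "finite (S ` {..<N})" "S ` {..<N} \<noteq> {}" using assms by (auto simp: lessThan_empty_iff)
  obtain j1 where "j1 < N" "S j1 = Min (S ` {..<N})"
    using Min_in[OF fin] by auto
  then have "P j1" unfolding P_def using fin by auto
  define j where "j = (LEAST j. P j)"
  have Pj: "P j" unfolding j_def by (rule LeastI) fact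
  moreover have "S j < S i" if "i < j" for i
  proof -
    have "\<not> P i" using not_less_Least[of i P] that unfolding j_def by blast
    moreover have "i < N" using that Pj by (simp add: P_def)
    ultimately obtain i' where "i' < N" "S i' < S i" unfolding P_def by auto
    then show ?thesis using Pj by (force simp: P_def)
  qed
  ultimately show ?thesis using that unfolding P_def by blast
qed

text \<open>Cycle lemma: rotate the word to start right after the first minimum of its excess walk.\<close>
lemma exists_rotation_degree_word:
  assumes lw: "length w = N" and N: "N \<ge> 1" and ex: "excess w = -1"
  shows "\<exists>j<N. \<exists>t. degree_word t = rotate j w"
proof -
  define S where "S j = excess (take j w)" for j
  obtain j0 where j0N: "j0 < N" and min: "\<And>i. i < N \<Longrightarrow> S j0 \<le> S i"
    and strict: "\<And>i. i < j0 \<Longrightarrow> S j0 < S i"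
    using obtain_first_argmin[OF N, where S = S] by blast
  have SN: "S N = -1" using ex lw by (simp add: S_def)
  have S_split: "S j0 + excess (drop j0 w) = -1"
    using ex by (simp add: S_def flip: excess_simps(3))
  define r where "r = drop j0 w @ take j0 w"
  have r_rot: "r = rotate j0 w" using j0N lw by (simp add: r_def rotate_drop_take)
  have positive: "0 < int 1 + excess (take m r)" if m: "m < length r" for m
  proof (cases "m \<le> N - j0")
    case True
    then have "S (j0 + m) = S j0 + excess (take m r)"
      using lw by (simp add: S_def r_def take_add)
    moreover have "S j0 \<le> S (j0 + m)"
    proof (cases "j0 + m < N")
      case False
      then have "j0 + m = N" and "0 < j0" using True j0N m lw by (auto simp: r_def)
      then show ?thesis using strict[of 0] SN by (simp add: S_def)
    qed (use min in auto)
    ultimately show ?thesis by simp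
  next
    case False
    define i where "i = m - (N - j0)"
    have i: "i < j0" using False m lw by (simp add: i_def r_def)
    have "take m r = drop j0 w @ take i w" using False lw i by (simp add: r_def i_def min_def)
    then have "excess (take m r) = -1 - S j0 + S i" using S_split by (simp add: S_def)
    then show ?thesis using strict[OF i] by simp
  qed
  have total: "int 1 + excess r = 0" using S_split by (simp add: r_def S_def add.commute)
  have "\<forall>j<length r. 0 < int 1 + excess (take j r)" using positive by blast
  from exists_forest_with_degree_word[OF this total]
  obtain ts where "length ts = 1" "concat (map degree_word ts) = r" by blast
  then obtain t where "degree_word t = r" by (cases ts) auto
  then show ?thesis using j0N r_rot by blast
qed

lemma finite_trees: "finite (trees N D)"
proof -
  have "degree_word ` trees N D \<subseteq> {w. set w \<subseteq> {..D} \<and> length w = N}"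
    by (auto simp: trees_def length_degree_word deg_le_iff_degree_word)
  moreover have "finite {w. set w \<subseteq> {..D} \<and> length w = N}"
    by (rule finite_lists_length_eq) simp
  ultimately show ?thesis
    using inj_degree_word by (metis finite_imageD finite_subset inj_on_subset subset_UNIV)
qed

section \<open>Trees with prescribed out-degree counts\<close>

definition trees_of_degrees :: "nat multiset \<Rightarrow> ptree set" where
  "trees_of_degrees A = {t. mset (degree_word t) = A}"

lemma mset_rotate: "mset (rotate n xs) = mset xs"
proof -
  let ?i = "n mod length xs"
  have "mset (rotate n xs) = mset (drop ?i xs) + mset (take ?i xs)"
    by (simp add: rotate_drop_take)
  also have "\<dots> = mset (take ?i xs @ drop ?i xs)"
    by (metis add.commute mset_append)
  finally show ?thesis by simp
qed

lemma permutations_subset_rotations: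
  assumes size: "size A = N" and N: "N \<ge> 1" and sum: "sum_mset A + 1 = N"
  shows "permutations_of_multiset A
    \<subseteq> (\<Union>t\<in>trees_of_degrees A. (\<lambda>i. rotate i (degree_word t)) ` {..<N})"
proof
  fix w assume "w \<in> permutations_of_multiset A"
  then have mw: "mset w = A" by (rule permutations_of_multisetD)
  then have lw: "length w = N" using size by (metis size_mset)
  have "sum_list w + 1 = N" using sum mw by (metis sum_mset_sum_list)
  then have "excess w = -1" using lw by (simp add: excess_eq)
  then obtain j t where j: "j < N" and t: "degree_word t = rotate j w"
    using exists_rotation_degree_word[OF lw N] by blast
  have tA: "t \<in> trees_of_degrees A" using t mw by (simp add: trees_of_degrees_def mset_rotate)
  show "w \<in> (\<Union>t\<in>trees_of_degrees A. (\<lambda>i. rotate i (degree_word t)) ` {..<N})"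
  proof (cases "j = 0")
    case True
    then have "w = rotate 0 (degree_word t)" using t by simp
    moreover have "0 \<in> {..<N}" using N by simp
    ultimately show ?thesis using tA by blast
  next
    case False
    have "rotate (N - j) (degree_word t) = rotate N w" using t j by (simp add: rotate_rotate)
    also have "\<dots> = w" using lw by simp
    finally have "rotate (N - j) (degree_word t) = w" .
    then show ?thesis using tA j False by force
  qed
qed

lemma
  assumes size: "size A = N" and N: "N \<ge> 1" and sum: "sum_mset A + 1 = N"
  shows finite_trees_of_degrees: "finite (trees_of_degrees A)"
    and card_trees_of_degrees_le: "card (trees_of_degrees A) \<le> card (permutations_of_multiset A)"
    and card_permutations_le_card_trees_of_degrees:
      "card (permutations_of_multiset A) \<le> N * card (trees_of_degrees A)"
proof -
  have sub: "degree_word ` trees_of_degrees A \<subseteq> permutations_of_multiset A"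
    by (auto simp: trees_of_degrees_def intro: permutations_of_multisetI)
  have inj: "inj_on degree_word (trees_of_degrees A)"
    using inj_degree_word by (simp add: inj_on_def inj_def)
  show fin: "finite (trees_of_degrees A)"
    using finite_subset[OF sub finite_permutations_of_multiset] finite_imageD[OF _ inj] by blast
  show "card (trees_of_degrees A) \<le> card (permutations_of_multiset A)"
    using card_inj_on_le[OF inj sub] by simp
  have "card (permutations_of_multiset A)
      \<le> card (\<Union>t\<in>trees_of_degrees A. (\<lambda>i. rotate i (degree_word t)) ` {..<N})"
    by (intro card_mono permutations_subset_rotations[OF assms]) (use fin in auto)
  also have "\<dots> \<le> (\<Sum>t\<in>trees_of_degrees A. card ((\<lambda>i. rotate i (degree_word t)) ` {..<N}))"
    by (rule card_UN_le[OF fin])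
  also have "\<dots> \<le> (\<Sum>t\<in>trees_of_degrees A. N)"
    by (intro sum_mono) (metis card_image_le card_lessThan finite_lessThan)
  finally show "card (permutations_of_multiset A) \<le> N * card (trees_of_degrees A)"
    by (simp add: mult.commute)
qed

definition degree_mset :: "nat \<Rightarrow> (nat \<Rightarrow> nat) \<Rightarrow> nat multiset" where
  "degree_mset D c = (\<Sum>k\<le>D. replicate_mset (c k) k)"

lemma count_degree_mset: "count (degree_mset D c) j = (if j \<le> D then c j else 0)"
proof -
  have "count (degree_mset D c) j = (\<Sum>k\<le>D. if k = j then c k else 0)"
    unfolding degree_mset_def count_sum by (intro sum.cong) auto
  then show ?thesis by (simp add: sum.delta')
qed

lemma size_degree_mset: "size (degree_mset D c) = (\<Sum>k\<le>D. c k)"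
  by (induction D) (auto simp: degree_mset_def)

lemma sum_mset_degree_mset: "sum_mset (degree_mset D c) = (\<Sum>k\<le>D. k * c k)"
  by (induction D) (auto simp: degree_mset_def)

lemma set_degree_mset: "set_mset (degree_mset D c) \<subseteq> {..D}"
proof
  fix x assume "x \<in># degree_mset D c"
  then have "count (degree_mset D c) x \<noteq> 0" by simp
  then show "x \<in> {..D}" by (simp add: count_degree_mset split: if_splits)
qed

lemma real_card_permutations_degree_mset:
  "real (card (permutations_of_multiset (degree_mset D c))) = fact (\<Sum>k\<le>D. c k) / (\<Prod>k\<le>D. fact (c k))"
proof -
  let ?A = "degree_mset D c"
  have "(\<Prod>x\<in>set_mset ?A. fact (count ?A x) :: nat) = (\<Prod>k\<le>D. fact (count ?A k))"
    by (rule prod.mono_neutral_left) (auto simp: set_degree_mset simp flip: count_eq_zero_iff)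
  also have "\<dots> = (\<Prod>k\<le>D. fact (c k))" by (intro prod.cong) (auto simp: count_degree_mset)
  finally have prod: "(\<Prod>x\<in>set_mset ?A. fact (count ?A x) :: nat) = (\<Prod>k\<le>D. fact (c k))" .
  have "real (card (permutations_of_multiset ?A)) =
        real (fact (size ?A) div (\<Prod>x\<in>set_mset ?A. fact (count ?A x)))"
    by (simp add: card_permutations_of_multiset(1))
  also have "\<dots> = real (fact (size ?A)) / real (\<Prod>x\<in>set_mset ?A. fact (count ?A x))"
    by (rule real_of_nat_div[OF card_permutations_of_multiset(2)])
  finally show ?thesis by (simp add: prod size_degree_mset of_nat_prod)
qed

lemma chi_eq_0_if_gt: "deg_le D t \<Longrightarrow> D < k \<Longrightarrow> chi k t = 0"
  by (auto simp: deg_le_iff_degree_word simp flip: count_degree_word)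

lemma mset_degree_word_eq: "deg_le D t \<Longrightarrow> mset (degree_word t) = degree_mset D (\<lambda>k. chi k t)"
  by (rule multiset_eqI) (simp add: count_degree_mset count_degree_word chi_eq_0_if_gt)

lemma chi_0_pos: "chi 0 t \<ge> 1"
proof (induction t)
  case (Node ts)
  show ?case
  proof (cases ts)
    case (Cons t ts')
    then have "1 \<le> chi 0 t" using Node.IH by simp
    then show ?thesis using Cons by simp
  qed simp
qed

lemma
  assumes "T \<in> trees N D"
  shows sum_chi: "(\<Sum>k\<le>D. chi k T) = N"
    and sum_mult_chi: "(\<Sum>k\<le>D. k * chi k T) + 1 = N"
proof -
  have deg: "deg_le D T" and nv: "nverts T = N" using assms by (auto simp: trees_def)
  show "(\<Sum>k\<le>D. chi k T) = N"
    using length_degree_word[of T] mset_degree_word_eq[OF deg] nv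
    by (metis size_degree_mset size_mset)
  show "(\<Sum>k\<le>D. k * chi k T) + 1 = N"
    using sum_list_degree_word[of T] mset_degree_word_eq[OF deg] nv
    by (metis sum_mset_degree_mset sum_mset_sum_list)
qed

lemma mem_trees_pos: "T \<in> trees N D \<Longrightarrow> N \<ge> 1"
  by (metis sum_mult_chi le_add2)

lemma chi_le: 
  assumes T: "T \<in> trees N D" shows "chi k T \<le> N"
proof (cases "k \<le> D")
  case True
  then have "chi k T \<le> (\<Sum>k\<le>D. chi k T)" by (intro member_le_sum) auto
  then show ?thesis using sum_chi[OF T] by simp
qed (use T in \<open>auto simp: trees_def chi_eq_0_if_gt not_le\<close>)

lemma trees_of_degrees_subset_trees:
  assumes T: "T \<in> trees N D" and t: "t \<in> trees_of_degrees (mset (degree_word T))"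
  shows "t \<in> trees N D" and "chi k t = chi k T"
proof -
  have m: "mset (degree_word t) = mset (degree_word T)"
    using t by (simp add: trees_of_degrees_def)
  then have "length (degree_word t) = length (degree_word T)" and "set (degree_word t) = set (degree_word T)"
    by (metis size_mset, metis set_mset_mset)
  then show "t \<in> trees N D"
    using T by (simp add: trees_def length_degree_word deg_le_iff_degree_word)
  show "chi k t = chi k T" using m count_degree_word by metis
qed

lemma exists_tree_with_chi:
  assumes sum: "(\<Sum>k\<le>D. c k) = N" and moment: "(\<Sum>k\<le>D. k * c k) + 1 = N"
  shows "\<exists>T\<in>trees N D. \<forall>k\<le>D. chi k T = c k"
proof -
  have N: "N \<ge> 1" using moment by simp
  have size: "size (degree_mset D c) = N" using sum by (simp add: size_degree_mset)
  have sum': "sum_mset (degree_mset D c) + 1 = N" using moment by (simp add: sum_mset_degree_mset)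
  obtain t where "t \<in> trees_of_degrees (degree_mset D c)"
    using permutations_subset_rotations[OF size N sum'] permutations_of_multiset_not_empty by blast
  then have m: "mset (degree_word t) = degree_mset D c" by (simp add: trees_of_degrees_def)
  have "nverts t = N" using m size length_degree_word by (metis size_mset)
  moreover have "deg_le D t"
    using m set_degree_mset by (metis atMost_iff deg_le_iff_degree_word set_mset_mset subsetD)
  moreover have "\<forall>k\<le>D. chi k t = c k" using m count_degree_word count_degree_mset by metis
  ultimately show ?thesis by (auto simp: trees_def)
qed

section \<open>Stirling bounds and entropy\<close>

lemma one_minus_inverse_le_ln: "0 < x \<Longrightarrow> 1 - 1 / x \<le> ln (x::real)"
  using ln_le_minus_one[of "1 / x"] by (simp add: ln_div)

lemma xlogx_eq: "xlogx x = x * ln x"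
  by (simp add: xlogx_def)

lemma mult_ln_Suc_le: "real n * ln (real n + 1) \<le> real n * ln (real n) + 1"
proof (cases "n = 0")
  case False
  then have n: "real n > 0" by simp
  have "1 + 1 / real n = (real n + 1) / real n" using n by (simp add: field_simps)
  then have "ln (real n + 1) - ln (real n) = ln (1 + 1 / real n)"
    using n by (simp add: ln_div)
  also have "\<dots> \<le> 1 / real n" by (rule ln_add_one_self_le_self) simp
  finally have "real n * (ln (real n + 1) - ln (real n)) \<le> real n * (1 / real n)"
    using n by (intro mult_left_mono) auto
  then show ?thesis using n by (simp add: algebra_simps)
qed simp

lemma ln_fact_lower: "xlogx (real n) - real n \<le> ln (fact n)"
proof (induction n)
  case (Suc n)
  have "ln (fact (Suc n)) = ln (real n + 1) + ln (fact n)"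
    by (simp add: ln_mult)
  moreover have "xlogx (real (Suc n)) - real (Suc n) \<le> ln (real n + 1) + (xlogx (real n) - real n)"
    using mult_ln_Suc_le[of n] by (simp add: xlogx_eq algebra_simps)
  ultimately show ?case using Suc.IH by simp
qed (simp add: xlogx_def)

lemma ln_fact_le_xlogx_Suc: "ln (fact n) \<le> xlogx (real n + 1) - real n"
proof (induction n)
  case (Suc n)
  have "1 / (real n + 2) \<le> ln (real n + 2) - ln (real n + 1)"
    using one_minus_inverse_le_ln[of "(real n + 2) / (real n + 1)"] by (simp add: ln_div field_simps)
  then have "1 \<le> (real n + 2) * (ln (real n + 2) - ln (real n + 1))"
    by (simp add: field_simps)
  moreover have "ln (fact (Suc n)) = ln (real n + 1) + ln (fact n)"
    by (simp add: ln_mult)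
  ultimately show ?case using Suc.IH by (simp add: xlogx_eq algebra_simps)
qed (simp add: xlogx_def)

lemma ln_fact_upper: "ln (fact n) \<le> xlogx (real n) - real n + 1 + ln (real n + 1)"
  using ln_fact_le_xlogx_Suc[of n] mult_ln_Suc_le[of n] by (simp add: xlogx_eq algebra_simps)

definition entropy :: "nat \<Rightarrow> (nat \<Rightarrow> real) \<Rightarrow> real" where
  "entropy D v = - (\<Sum>k\<le>D. xlogx (v k))"

lemma entropy_frequencies:
  fixes c :: "nat \<Rightarrow> nat"
  assumes sum: "(\<Sum>k\<le>D. c k) = N" and N: "N \<ge> 1"
  shows "real N * entropy D (\<lambda>k. real (c k) / real N) = xlogx (real N) - (\<Sum>k\<le>D. xlogx (real (c k)))"
proof -
  have N: "real N > 0" using N by simp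
  have summand: "real N * xlogx (real (c k) / real N) = xlogx (real (c k)) - real (c k) * ln (real N)" for k
    using N by (cases "c k = 0") (simp_all add: xlogx_def ln_div field_simps)
  have "real N * entropy D (\<lambda>k. real (c k) / real N) = - (\<Sum>k\<le>D. real N * xlogx (real (c k) / real N))"
    by (simp add: entropy_def sum_distrib_left)
  also have "\<dots> = - (\<Sum>k\<le>D. xlogx (real (c k))) + (\<Sum>k\<le>D. real (c k)) * ln (real N)"
    by (simp add: summand sum_subtractf sum_distrib_right)
  also have "(\<Sum>k\<le>D. real (c k)) = real N" using sum by (metis of_nat_sum)
  finally show ?thesis by (simp add: xlogx_eq)
qed

lemma
  fixes c :: "nat \<Rightarrow> nat"
  assumes sum: "(\<Sum>k\<le>D. c k) = N" and N: "N \<ge> 1"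
  shows ln_multinomial_le:
      "ln (fact N / (\<Prod>k\<le>D. fact (c k))) \<le> real N * entropy D (\<lambda>k. real (c k) / real N) + 1 + ln (real N + 1)"
    and ln_multinomial_ge:
      "real N * entropy D (\<lambda>k. real (c k) / real N) - real (D + 1) * (1 + ln (real N + 1))
         \<le> ln (fact N / (\<Prod>k\<le>D. fact (c k)))"
proof -
  have ln_eq: "ln (fact N / (\<Prod>k\<le>D. fact (c k)) :: real) = ln (fact N) - (\<Sum>k\<le>D. ln (fact (c k)))"
    by (simp add: ln_div ln_prod prod_pos)
  have sum': "(\<Sum>k\<le>D. real (c k)) = real N" using sum by (metis of_nat_sum)
  note freq = entropy_frequencies[OF sum N]
  have "(\<Sum>k\<le>D. xlogx (real (c k)) - real (c k)) \<le> (\<Sum>k\<le>D. ln (fact (c k)))"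
    by (intro sum_mono ln_fact_lower)
  then show "ln (fact N / (\<Prod>k\<le>D. fact (c k))) \<le> real N * entropy D (\<lambda>k. real (c k) / real N) + 1 + ln (real N + 1)"
    using ln_eq freq ln_fact_upper[of N] sum' by (simp add: sum_subtractf)
  have "(\<Sum>k\<le>D. ln (fact (c k))) \<le> (\<Sum>k\<le>D. xlogx (real (c k)) - real (c k) + (1 + ln (real N + 1)))"
  proof (intro sum_mono)
    fix k assume "k \<in> {..D}"
    then have "c k \<le> N" using sum by (metis finite_atMost member_le_sum zero_le)
    then have "ln (real (c k) + 1) \<le> ln (real N + 1)" by simp
    then show "ln (fact (c k)) \<le> xlogx (real (c k)) - real (c k) + (1 + ln (real N + 1))"
      using ln_fact_upper[of "c k"] by linarith
  qed
  then show "real N * entropy D (\<lambda>k. real (c k) / real N) - real (D + 1) * (1 + ln (real N + 1))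
      \<le> ln (fact N / (\<Prod>k\<le>D. fact (c k)))"
    using ln_eq freq ln_fact_lower[of N] sum' by (simp add: sum.distrib sum_subtractf)
qed

lemma continuous_on_xlogx: "continuous_on {0..1} xlogx"
proof -
  have "continuous (at x within {0..1}) (\<lambda>x. x * ln x)" if x: "x \<in> {0..1}" for x :: real
  proof (cases "x = 0")
    case True
    have "((\<lambda>x::real. x * ln x) \<longlongrightarrow> 0) (at_right 0)" by real_asymp
    then show ?thesis using True by (simp add: continuous_within at_within_Icc_at_right)
  next
    case False
    then have "isCont (\<lambda>x. x * ln x) x" using x by (intro continuous_intros) auto
    then show ?thesis using continuous_at_imp_continuous_at_within by blast
  qed
  moreover have "xlogx = (\<lambda>x. x * ln x)" by (simp add: xlogx_eq fun_eq_iff)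
  ultimately show ?thesis by (simp add: continuous_on_eq_continuous_within)
qed

lemma xlogx_bounds: "0 \<le> u \<Longrightarrow> u \<le> 1 \<Longrightarrow> -1 \<le> xlogx u \<and> xlogx u \<le> 0"
proof (cases "u = 0")
  case False
  assume u: "0 \<le> u" "u \<le> 1"
  with False have "u - 1 \<le> u * ln u"
    using mult_left_mono[OF one_minus_inverse_le_ln[of u], of u] by (simp add: algebra_simps)
  moreover have "u * ln u \<le> 0" using u False by (simp add: mult_nonneg_nonpos)
  ultimately show ?thesis using u by (simp add: xlogx_eq)
qed (simp add: xlogx_def)

lemma entropy_le: "(\<And>k. k \<le> D \<Longrightarrow> 0 \<le> v k \<and> v k \<le> 1) \<Longrightarrow> entropy D v \<le> real (D + 1)"
  using sum_mono[of "{..D}" "\<lambda>_. -1" "\<lambda>k. xlogx (v k)"] xlogx_bounds by (simp add: entropy_def)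

lemma entropy_uniformly_continuous:
  assumes e: "e > 0"
  obtains d where "d > 0"
    and "\<And>u v. (\<And>k. k \<le> D \<Longrightarrow> u k \<in> {0..1} \<and> v k \<in> {0..1} \<and> \<bar>u k - v k\<bar> < d)
           \<Longrightarrow> entropy D u \<le> entropy D v + e"
proof -
  have "uniformly_continuous_on {0..1::real} xlogx"
    by (rule compact_uniformly_continuous[OF continuous_on_xlogx compact_Icc])
  moreover have "e / real (D + 1) > 0" using e by simp
  ultimately obtain d where d: "d > 0"
    and close: "\<And>u v. u \<in> {0..1} \<Longrightarrow> v \<in> {0..1} \<Longrightarrow> dist v u < d
                  \<Longrightarrow> dist (xlogx v) (xlogx u) < e / real (D + 1)"
    unfolding uniformly_continuous_on_def by metis
  have "entropy D u \<le> entropy D v + e"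
    if uv: "\<And>k. k \<le> D \<Longrightarrow> u k \<in> {0..1} \<and> v k \<in> {0..1} \<and> \<bar>u k - v k\<bar> < d" for u v
  proof -
    have "(\<Sum>k\<le>D. xlogx (v k) - xlogx (u k)) \<le> (\<Sum>k\<le>D. e / real (D + 1))"
    proof (intro sum_mono)
      fix k assume "k \<in> {..D}"
      with uv have "dist (xlogx (v k)) (xlogx (u k)) < e / real (D + 1)"
        by (intro close) (auto simp: dist_real_def abs_minus_commute)
      then show "xlogx (v k) - xlogx (u k) \<le> e / real (D + 1)" by (simp add: dist_real_def)
    qed
    then show ?thesis by (simp add: entropy_def sum_subtractf)
  qed
  with d that show ?thesis by blast
qed

lemma tendsto_entropy:
  assumes "\<And>k. k \<le> D \<Longrightarrow> ((\<lambda>n. v n k) \<longlongrightarrow> p k) F"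
    and "\<And>k. k \<le> D \<Longrightarrow> eventually (\<lambda>n. v n k \<in> {0..1}) F"
    and "\<And>k. k \<le> D \<Longrightarrow> p k \<in> {0..1}"
  shows "((\<lambda>n. entropy D (v n)) \<longlongrightarrow> entropy D p) F"
  unfolding entropy_def
  by (intro tendsto_minus tendsto_sum continuous_on_tendsto_compose[OF continuous_on_xlogx] assms) auto

section \<open>The shifted degree vector\<close>

lemma sum_split_0_1:
  fixes f :: "nat \<Rightarrow> 'a::comm_monoid_add"
  assumes "D \<ge> 1"
  shows "(\<Sum>k\<le>D. f k) = f 0 + f 1 + (\<Sum>k=2..D. f k)"
    and "(\<Sum>k=1..D. f k) = f 1 + (\<Sum>k=2..D. f k)"
proof -
  show "(\<Sum>k=1..D. f k) = f 1 + (\<Sum>k=2..D. f k)"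
    using assms by (subst sum.atLeast_Suc_atMost) (auto simp: numeral_2_eq_2)
  moreover have "(\<Sum>k\<le>D. f k) = f 0 + (\<Sum>k=1..D. f k)"
    by (simp add: atMost_atLeast0 sum.atLeast_Suc_atMost)
  ultimately show "(\<Sum>k\<le>D. f k) = f 0 + f 1 + (\<Sum>k=2..D. f k)"
    by (simp add: add.assoc)
qed

definition shifted_deg :: "nat \<Rightarrow> nat \<Rightarrow> ptree \<Rightarrow> nat \<Rightarrow> real" where
  "shifted_deg D N T = (\<lambda>k. if k \<le> D
     then (real (chi k T) + (if k = 1 then 1 else 0) - (if k = 0 then 1 else 0)) / real N else 0)"

lemma shifted_deg_minus_emp_deg:
  "shifted_deg D N T k - emp_deg D N T k =
     (if k \<le> D then ((if k = 1 then 1 else 0) - (if k = 0 then 1 else 0)) / real N else 0)"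
  by (simp add: shifted_deg_def emp_deg_def diff_divide_distrib add_divide_distrib)

lemma abs_emp_deg_minus_shifted_deg_le: "\<bar>emp_deg D N T k - shifted_deg D N T k\<bar> \<le> 1 / real N"
proof -
  have "\<bar>shifted_deg D N T k - emp_deg D N T k\<bar> \<le> 1 / real N"
    using shifted_deg_minus_emp_deg[of D N T k] by (cases "k \<le> D"; cases "k = 0"; cases "k = 1") auto
  then show ?thesis by (simp add: abs_minus_commute)
qed

lemma l1_dist_emp_deg_shifted_deg:
  assumes "D \<ge> 1"
  shows "(\<Sum>k\<le>D. \<bar>emp_deg D N T k - shifted_deg D N T k\<bar>) = 2 / real N"
proof -
  have "\<bar>emp_deg D N T k - shifted_deg D N T k\<bar> = (if k \<le> D \<and> k \<le> 1 then 1 / real N else 0)" for k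
  proof -
    have "\<bar>emp_deg D N T k - shifted_deg D N T k\<bar> = \<bar>shifted_deg D N T k - emp_deg D N T k\<bar>"
      by (rule abs_minus_commute)
    then show ?thesis
      by (simp only: shifted_deg_minus_emp_deg) (cases "k \<le> D"; cases "k = 0"; cases "k = 1"; simp)
  qed
  note d = this
  have "(\<Sum>k\<le>D. \<bar>emp_deg D N T k - shifted_deg D N T k\<bar>) = \<bar>emp_deg D N T 0 - shifted_deg D N T 0\<bar>
      + \<bar>emp_deg D N T 1 - shifted_deg D N T 1\<bar> + (\<Sum>k=2..D. \<bar>emp_deg D N T k - shifted_deg D N T k\<bar>)"
    by (rule sum_split_0_1(1)[OF assms])
  also have "(\<Sum>k=2..D. \<bar>emp_deg D N T k - shifted_deg D N T k\<bar>) = 0"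
    by (intro sum.neutral) (auto simp: d)
  finally show ?thesis using assms by (simp add: d)
qed

lemma emp_deg_in_cube: "T \<in> trees N D \<Longrightarrow> emp_deg D N T \<in> cube D"
  using chi_le[of T N D] mem_trees_pos[of T N D] by (auto simp: cube_def emp_deg_def)

lemma shifted_deg_in_MD:
  assumes T: "T \<in> trees N D" and D: "D \<ge> 1"
  shows "shifted_deg D N T \<in> MD D"
proof -
  have N: "real N > 0" using mem_trees_pos[OF T] by simp
  define y where "y k = real (chi k T) + (if k = 1 then 1 else 0) - (if k = 0 then 1 else 0)" for k
  have s: "shifted_deg D N T = (\<lambda>k. if k \<le> D then y k / real N else 0)"
    by (simp add: fun_eq_iff shifted_deg_def y_def)
  have "real (\<Sum>k\<le>D. chi k T) = real N" using sum_chi[OF T] by (simp only:)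
  then have "(\<Sum>k\<le>D. real (chi k T)) = real N" by (simp add: of_nat_sum)
  then have sum_y: "(\<Sum>k\<le>D. y k) = real N"
    unfolding sum_split_0_1(1)[OF D] using D by (simp add: y_def)
  have "real ((\<Sum>k\<le>D. k * chi k T) + 1) = real N" using sum_mult_chi[OF T] by (simp only:)
  then have "(\<Sum>k\<le>D. real k * real (chi k T)) + 1 = real N" by (simp add: of_nat_sum)
  then have moment_y: "(\<Sum>k=1..D. real k * y k) = real N"
    unfolding sum_split_0_1[OF D] using D by (simp add: y_def)
  have y_nonneg: "0 \<le> y k" for k
    using chi_0_pos[of T] by (simp add: y_def)
  have y_le: "y k \<le> real N" if "k \<le> D" for k
    using member_le_sum[of k "{..D}" y] y_nonneg that sum_y by simp
  have "(\<Sum>k\<le>D. y k / real N) = (\<Sum>k\<le>D. y k) / real N"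
    and "(\<Sum>k=1..D. real k * (y k / real N)) = (\<Sum>k=1..D. real k * y k) / real N"
    by (simp_all add: sum_divide_distrib)
  then have "(\<Sum>k\<le>D. y k / real N) = 1" and "(\<Sum>k=1..D. real k * (y k / real N)) = 1"
    using sum_y moment_y N by simp_all
  then show ?thesis
    using N y_nonneg y_le by (simp add: MD_def s)
qed

section \<open>Counting trees by their empirical entropy\<close>

definition types_slack :: "nat \<Rightarrow> nat \<Rightarrow> real" where
  "types_slack D N = real (D + 2) * (1 + ln (real N + 1))"

lemma types_slack_over_N_tendsto: "((\<lambda>N. types_slack D N / real N) \<longlongrightarrow> 0) sequentially"
  unfolding types_slack_def by real_asymp

lemma entropy_emp_deg: "entropy D (emp_deg D N T) = entropy D (\<lambda>k. real (chi k T) / real N)"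
  unfolding entropy_def emp_deg_def by (intro arg_cong[where f = uminus] sum.cong) auto

lemma
  assumes T: "T \<in> trees N D"
  defines "C \<equiv> trees_of_degrees (mset (degree_word T))"
  shows finite_degree_class: "finite C"
    and card_degree_class_pos: "card C \<ge> 1"
    and ln_card_degree_class_le: "ln (real (card C)) \<le> real N * entropy D (emp_deg D N T) + 1 + ln (real N + 1)"
    and ln_card_degree_class_ge: "real N * entropy D (emp_deg D N T) - types_slack D N \<le> ln (real (card C))"
proof -
  define c where "c k = chi k T" for k
  have N: "N \<ge> 1" using mem_trees_pos[OF T] .
  have A: "mset (degree_word T) = degree_mset D c"
    unfolding c_def by (rule mset_degree_word_eq) (use T in \<open>simp add: trees_def\<close>)
  have sum: "(\<Sum>k\<le>D. c k) = N" using sum_chi[OF T] by (simp add: c_def)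
  have size: "size (degree_mset D c) = N" using sum by (simp add: size_degree_mset)
  have sum': "sum_mset (degree_mset D c) + 1 = N"
    using sum_mult_chi[OF T] by (simp add: sum_mset_degree_mset c_def)
  show fin: "finite C" using finite_trees_of_degrees[OF size N sum'] by (simp add: C_def A)
  have "T \<in> C" by (simp add: C_def trees_of_degrees_def)
  with fin show pos: "card C \<ge> 1" by (metis One_nat_def Suc_leI card_gt_0_iff empty_iff)
  let ?W = "real (card (permutations_of_multiset (degree_mset D c)))"
  have W: "?W = fact N / (\<Prod>k\<le>D. fact (c k))"
    using real_card_permutations_degree_mset[of D c] sum by simp
  have W_pos: "?W > 0" by (simp add: card_gt_0_iff)
  have ent: "entropy D (emp_deg D N T) = entropy D (\<lambda>k. real (c k) / real N)"
    by (simp add: entropy_emp_deg c_def)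
  have "real (card C) \<le> ?W"
    using card_trees_of_degrees_le[OF size N sum'] by (simp add: C_def A)
  then have "ln (real (card C)) \<le> ln ?W" using pos by simp
  then show "ln (real (card C)) \<le> real N * entropy D (emp_deg D N T) + 1 + ln (real N + 1)"
    using ln_multinomial_le[OF sum N] W ent by simp
  have "?W \<le> real N * real (card C)"
    using card_permutations_le_card_trees_of_degrees[OF size N sum'] by (simp add: C_def A flip: of_nat_mult)
  then have "ln ?W \<le> ln (real N * real (card C))"
    using W_pos by simp
  also have "\<dots> = ln (real N) + ln (real (card C))"
    using pos N by (simp add: ln_mult)
  finally have "ln ?W \<le> ln (real N) + ln (real (card C))" .
  moreover have "ln (real N) \<le> ln (real N + 1)" using N by simp
  then have "ln (real N) \<le> 1 + ln (real N + 1)" by simp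
  ultimately show "real N * entropy D (emp_deg D N T) - types_slack D N \<le> ln (real (card C))"
    using ln_multinomial_ge[OF sum N] W ent by (simp add: types_slack_def algebra_simps)
qed

lemma card_degree_classes_le: "card ((\<lambda>T. mset (degree_word T)) ` trees N D) \<le> (N + 1) ^ (D + 1)"
proof -
  let ?I = "(\<lambda>T. mset (degree_word T)) ` trees N D"
  let ?f = "\<lambda>A. restrict (count A) {..D}"
  have sub: "\<And>A. A \<in> ?I \<Longrightarrow> set_mset A \<subseteq> {..D} \<and> size A = N"
    by (auto simp: trees_def deg_le_iff_degree_word length_degree_word)
  have "inj_on ?f ?I"
  proof (rule inj_onI)
    fix A B assume A: "A \<in> ?I" and B: "B \<in> ?I" and eq: "?f A = ?f B"
    show "A = B"
    proof (rule multiset_eqI)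
      fix x show "count A x = count B x"
      proof (cases "x \<le> D")
        case True then show ?thesis using eq by (metis atMost_iff restrict_apply')
      next
        case False
        then have "x \<notin># A" "x \<notin># B" using sub[OF A] sub[OF B] by auto
        then show ?thesis by (simp add: not_in_iff)
      qed
    qed
  qed
  moreover have "?f ` ?I \<subseteq> PiE {..D} (\<lambda>_. {..N})"
    using sub count_le_size by fastforce
  ultimately have "card ?I \<le> card (PiE {..D} (\<lambda>_. {..N::nat}))"
    by (intro card_inj_on_le) (simp_all add: finite_PiE)
  also have "\<dots> = (N + 1) ^ (D + 1)" by (simp add: card_PiE)
  finally show ?thesis .
qed

lemma card_le_card_degree_classes_mult:
  assumes S: "S \<subseteq> trees N D" "S \<noteq> {}"
    and B: "\<And>T. T \<in> S \<Longrightarrow> real (card (trees_of_degrees (mset (degree_word T)))) \<le> B"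
  shows "real (card S) \<le> real ((N + 1) ^ (D + 1)) * B"
proof -
  let ?I = "(\<lambda>T. mset (degree_word T)) ` S"
  have fin_S: "finite S" using finite_subset[OF S(1) finite_trees] .
  have B_nonneg: "0 \<le> B" using S(2) B by (meson ex_in_conv of_nat_0_le_iff order.trans)
  have fin_classes: "finite (\<Union>A\<in>?I. trees_of_degrees A)"
    using fin_S finite_degree_class S(1) by blast
  have "S \<subseteq> (\<Union>A\<in>?I. trees_of_degrees A)" by (auto simp: trees_of_degrees_def)
  then have "card S \<le> card (\<Union>A\<in>?I. trees_of_degrees A)" by (rule card_mono[OF fin_classes])
  also have "\<dots> \<le> (\<Sum>A\<in>?I. card (trees_of_degrees A))" by (rule card_UN_le) (use fin_S in simp)
  finally have "real (card S) \<le> (\<Sum>A\<in>?I. real (card (trees_of_degrees A)))"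
    by (metis of_nat_le_iff of_nat_sum)
  also have "\<dots> \<le> (\<Sum>A\<in>?I. B)" by (rule sum_mono) (use B in auto)
  also have "\<dots> = real (card ?I) * B" by simp
  also have "\<dots> \<le> real ((N + 1) ^ (D + 1)) * B"
  proof -
    have "card ?I \<le> card ((\<lambda>T. mset (degree_word T)) ` trees N D)"
      by (rule card_mono) (use S(1) finite_trees in auto)
    then have "card ?I \<le> (N + 1) ^ (D + 1)" using card_degree_classes_le le_trans by blast
    then show ?thesis using B_nonneg by (intro mult_right_mono) (simp_all only: of_nat_le_iff)
  qed
  finally show ?thesis .
qed

text \<open>Method of types: at most polynomially many degree classes, each of size \<open>\<le> exp (N H)\<close>.\<close>
lemma ln_card_le_entropy:
  assumes S: "S \<subseteq> trees N D" "S \<noteq> {}"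
    and H: "\<And>T. T \<in> S \<Longrightarrow> entropy D (emp_deg D N T) \<le> h"
  shows "ln (real (card S)) \<le> real N * h + types_slack D N"
proof -
  define B where "B = exp (real N * h + 1 + ln (real N + 1))"
  have B_pos: "B > 0" by (simp add: B_def)
  have "real (card (trees_of_degrees (mset (degree_word T)))) \<le> B" if "T \<in> S" for T
  proof -
    have T: "T \<in> trees N D" using that S by auto
    have "real N * entropy D (emp_deg D N T) \<le> real N * h" using H[OF that] by (simp add: mult_left_mono)
    then have "ln (real (card (trees_of_degrees (mset (degree_word T))))) \<le> ln B"
      using ln_card_degree_class_le[OF T] by (simp add: B_def)
    then show ?thesis using card_degree_class_pos[OF T] B_pos by simp
  qed
  from card_le_card_degree_classes_mult[OF S this]
  have le: "real (card S) \<le> real ((N + 1) ^ (D + 1)) * B" .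
  have "card S > 0" using S(2) finite_subset[OF S(1) finite_trees] by (simp add: card_gt_0_iff)
  then have "ln (real (card S)) \<le> ln (real ((N + 1) ^ (D + 1)) * B)" using le by simp
  also have "\<dots> = ln (real ((N + 1) ^ (D + 1))) + ln B"
    using B_pos by (intro ln_mult_pos) (simp_all only: of_nat_0_less_iff zero_less_power zero_less_Suc
        Suc_eq_plus1[symmetric])
  also have "ln (real ((N + 1) ^ (D + 1))) = real (D + 1) * ln (real N + 1)"
    by (subst of_nat_power, subst ln_realpow) auto
  finally have "ln (real (card S)) \<le> real (D + 1) * ln (real N + 1) + (real N * h + 1 + ln (real N + 1))"
    by (simp add: B_def)
  moreover have "0 \<le> ln (real N + 1)" by simp
  ultimately show ?thesis by (simp add: types_slack_def algebra_simps)
qed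

lemma entropy_le_ln_card:
  assumes T: "T \<in> trees N D" and sub: "trees_of_degrees (mset (degree_word T)) \<subseteq> S" and fin: "finite S"
  shows "real N * entropy D (emp_deg D N T) - types_slack D N \<le> ln (real (card S))"
proof -
  have "card (trees_of_degrees (mset (degree_word T))) \<le> card S" by (rule card_mono[OF fin sub])
  then have "ln (real (card (trees_of_degrees (mset (degree_word T))))) \<le> ln (real (card S))"
    using card_degree_class_pos[OF T] by simp
  then show ?thesis using ln_card_degree_class_ge[OF T] by simp
qed

section \<open>Approximating points of \<open>MD D\<close> by trees\<close>

lemma floor_scaled_over_N_tendsto:
  assumes p: "0 \<le> p"
  shows "((\<lambda>N::nat. real (nat \<lfloor>real (N - 1) * p\<rfloor>) / real N) \<longlongrightarrow> p) sequentially"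
proof (rule tendsto_sandwich)
  have floor_eq: "real (nat \<lfloor>real (N - 1) * p\<rfloor>) = of_int \<lfloor>real (N - 1) * p\<rfloor>" for N
    using p by simp
  have ratio: "((\<lambda>N::nat. real (N - 1) / real N) \<longlongrightarrow> 1) sequentially"
  proof -
    have "((\<lambda>N::nat. 1 - 1 / real N) \<longlongrightarrow> 1) sequentially" by real_asymp
    moreover have "eventually (\<lambda>N::nat. 1 - 1 / real N = real (N - 1) / real N) sequentially"
      by (rule eventually_sequentiallyI[of 1]) (simp add: of_nat_diff field_simps)
    ultimately show ?thesis by (rule Lim_transform_eventually)
  qed
  have inverse: "((\<lambda>N::nat. 1 / real N) \<longlongrightarrow> 0) sequentially" by real_asymp
  show "eventually (\<lambda>N. p * (real (N - 1) / real N) - 1 / real N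
      \<le> real (nat \<lfloor>real (N - 1) * p\<rfloor>) / real N) sequentially"
  proof (rule eventually_sequentiallyI[of 1])
    fix N :: nat assume "N \<ge> 1"
    have "real (N - 1) * p - 1 \<le> real (nat \<lfloor>real (N - 1) * p\<rfloor>)"
      using floor_eq[of N] by linarith
    then have "(real (N - 1) * p - 1) / real N \<le> real (nat \<lfloor>real (N - 1) * p\<rfloor>) / real N"
      by (rule divide_right_mono) simp
    then show "p * (real (N - 1) / real N) - 1 / real N \<le> real (nat \<lfloor>real (N - 1) * p\<rfloor>) / real N"
      by (simp add: diff_divide_distrib mult.commute)
  qed
  show "eventually (\<lambda>N. real (nat \<lfloor>real (N - 1) * p\<rfloor>) / real N \<le> p * (real (N - 1) / real N)) sequentially"
  proof (rule always_eventually, rule allI)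
    fix N :: nat
    have "real (nat \<lfloor>real (N - 1) * p\<rfloor>) \<le> real (N - 1) * p"
      using floor_eq[of N] by linarith
    then have "real (nat \<lfloor>real (N - 1) * p\<rfloor>) / real N \<le> (real (N - 1) * p) / real N"
      by (rule divide_right_mono) simp
    then show "real (nat \<lfloor>real (N - 1) * p\<rfloor>) / real N \<le> p * (real (N - 1) / real N)"
      by (simp add: mult.commute)
  qed
  show "((\<lambda>N. p * (real (N - 1) / real N) - 1 / real N) \<longlongrightarrow> p) sequentially"
    using tendsto_diff[OF tendsto_mult[OF tendsto_const ratio] inverse] by simp
  show "((\<lambda>N. p * (real (N - 1) / real N)) \<longlongrightarrow> p) sequentially"
    using tendsto_mult[OF tendsto_const ratio] by simp
qed

text \<open>
  The counts \<open>(N - 1) p\<^sub>k\<close> of out-degrees \<open>k \<ge> 2\<close> are rounded down; those of out-degrees 0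
  and 1 are then forced by the two linear constraints on a tree's degree counts.
\<close>
definition rounded_counts :: "nat \<Rightarrow> (nat \<Rightarrow> real) \<Rightarrow> nat \<Rightarrow> nat \<Rightarrow> nat" where
  "rounded_counts D p N k =
     (if k = 0 then (\<Sum>j=2..D. (j - 1) * nat \<lfloor>real (N - 1) * p j\<rfloor>) + 1
      else if k = 1 then N - 1 - (\<Sum>j=2..D. j * nat \<lfloor>real (N - 1) * p j\<rfloor>)
      else nat \<lfloor>real (N - 1) * p k\<rfloor>)"

lemma MD_moments:
  assumes "p \<in> MD D" and "D \<ge> 1"
  shows "(\<Sum>k=2..D. p k) = 1 - p 0 - p 1" and "(\<Sum>k=2..D. real k * p k) = 1 - p 1"
  using assms sum_split_0_1[OF assms(2), of p] sum_split_0_1(2)[OF assms(2), of "\<lambda>k. real k * p k"]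
  by (auto simp: MD_def)

lemma rounded_moment_le:
  assumes p: "p \<in> MD D" and D: "D \<ge> 1"
  shows "(\<Sum>j=2..D. j * nat \<lfloor>real (N - 1) * p j\<rfloor>) \<le> N - 1"
proof -
  let ?m = "\<lambda>j. nat \<lfloor>real (N - 1) * p j\<rfloor>"
  have "real (\<Sum>j=2..D. j * ?m j) = (\<Sum>j=2..D. real j * real (?m j))" by (simp add: of_nat_sum)
  also have "\<dots> \<le> (\<Sum>j=2..D. real j * (real (N - 1) * p j))"
  proof (intro sum_mono mult_left_mono)
    fix j assume "j \<in> {2..D}"
    then have "0 \<le> real (N - 1) * p j" using p by (simp add: MD_def)
    then show "real (?m j) \<le> real (N - 1) * p j" by linarith
  qed simp
  also have "\<dots> = real (N - 1) * (\<Sum>j=2..D. real j * p j)"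
    by (simp add: sum_distrib_left mult.left_commute)
  also have "\<dots> = real (N - 1) * (1 - p 1)"
    using MD_moments(2)[OF p D] by simp
  also have "\<dots> \<le> real (N - 1)" using p D by (simp add: MD_def mult_left_le)
  finally show ?thesis by linarith
qed

lemma rounded_counts_sums:
  assumes p: "p \<in> MD D" and D: "D \<ge> 1" and N: "N \<ge> 1"
  shows "(\<Sum>k\<le>D. rounded_counts D p N k) = N"
    and "(\<Sum>k\<le>D. k * rounded_counts D p N k) + 1 = N"
proof -
  let ?m = "\<lambda>j. nat \<lfloor>real (N - 1) * p j\<rfloor>"
  have high: "(\<Sum>k=2..D. f k * rounded_counts D p N k) = (\<Sum>k=2..D. f k * ?m k)" for f :: "nat \<Rightarrow> nat"
    by (rule sum.cong) (auto simp: rounded_counts_def)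
  have "(\<Sum>k=2..D. (k - 1) * ?m k) + (\<Sum>k=2..D. ?m k) = (\<Sum>k=2..D. k * ?m k)"
    by (simp flip: sum.distrib add: algebra_simps)
  then show "(\<Sum>k\<le>D. rounded_counts D p N k) = N"
    using sum_split_0_1(1)[OF D, of "rounded_counts D p N"] high[of "\<lambda>_. 1"] rounded_moment_le[OF p D, of N] N
    by (simp add: rounded_counts_def)
  show "(\<Sum>k\<le>D. k * rounded_counts D p N k) + 1 = N"
    using sum_split_0_1(1)[OF D, of "\<lambda>k. k * rounded_counts D p N k"] high[of "\<lambda>k. k"]
      rounded_moment_le[OF p D, of N] N
    by (simp add: rounded_counts_def)
qed

lemma rounded_counts_shifted_tendsto:
  assumes p: "p \<in> MD D" and D: "D \<ge> 1" and k: "k \<le> D"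
  shows "((\<lambda>N. (real (rounded_counts D p N k) + (if k = 1 then 1 else 0) - (if k = 0 then 1 else 0))
            / real N) \<longlongrightarrow> p k) sequentially"
proof -
  define r where "r N j = real (nat \<lfloor>real (N - 1) * p j\<rfloor>) / real N" for N j
  have r: "((\<lambda>N. r N j) \<longlongrightarrow> p j) sequentially" if "j \<le> D" for j
    unfolding r_def by (rule floor_scaled_over_N_tendsto) (use p that in \<open>simp add: MD_def\<close>)
  define f where "f N = (\<Sum>j=2..D. (if k = 0 then real j - 1 else if k = 1 then - real j else 0) * r N j)
                        + (if k = 1 then 1 else 0) + (if k \<ge> 2 then r N k else 0)" for N
  have "eventually (\<lambda>N. f N = (real (rounded_counts D p N k) + (if k = 1 then 1 else 0)
      - (if k = 0 then 1 else 0)) / real N) sequentially"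
  proof (rule eventually_sequentiallyI[of 1])
    fix N :: nat assume N: "N \<ge> 1"
    show "f N = (real (rounded_counts D p N k) + (if k = 1 then 1 else 0) - (if k = 0 then 1 else 0)) / real N"
      using rounded_moment_le[OF p D, of N] N
      by (auto simp: f_def r_def rounded_counts_def of_nat_sum of_nat_diff field_simps sum_negf
          simp flip: sum_divide_distrib)
  qed
  moreover have "(f \<longlongrightarrow> (\<Sum>j=2..D. (if k = 0 then real j - 1 else if k = 1 then - real j else 0) * p j)
      + (if k = 1 then 1 else 0) + (if k \<ge> 2 then p k else 0)) sequentially"
    unfolding f_def using k by (intro tendsto_intros r) (auto intro: r)
  moreover have "(\<Sum>j=2..D. (if k = 0 then real j - 1 else if k = 1 then - real j else 0) * p j)
      + (if k = 1 then 1 else 0) + (if k \<ge> 2 then p k else 0) = p k"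
    using MD_moments[OF p D] by (cases "k = 0") (auto simp: algebra_simps sum_subtractf sum_negf)
  ultimately show ?thesis by (simp add: tendsto_cong)
qed

lemma exists_trees_shifted_deg_tendsto:
  assumes D: "D \<ge> 1" and p: "p \<in> MD D"
  obtains T where "\<forall>N\<ge>1. T N \<in> trees N D"
    and "\<And>k. ((\<lambda>N. shifted_deg D N (T N) k) \<longlongrightarrow> p k) sequentially"
proof -
  have "\<forall>N. \<exists>T. N \<ge> 1 \<longrightarrow> T \<in> trees N D \<and> (\<forall>k\<le>D. chi k T = rounded_counts D p N k)"
    using exists_tree_with_chi[OF rounded_counts_sums[OF p D]] by blast
  then obtain T where T: "\<And>N. N \<ge> 1 \<Longrightarrow> T N \<in> trees N D \<and> (\<forall>k\<le>D. chi k (T N) = rounded_counts D p N k)"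
    by metis
  have "((\<lambda>N. shifted_deg D N (T N) k) \<longlongrightarrow> p k) sequentially" for k
  proof (cases "k \<le> D")
    case True
    have "eventually (\<lambda>N. (real (rounded_counts D p N k) + (if k = 1 then 1 else 0) - (if k = 0 then 1 else 0))
        / real N = shifted_deg D N (T N) k) sequentially"
      by (rule eventually_sequentiallyI[of 1]) (use T True in \<open>simp add: shifted_deg_def\<close>)
    with rounded_counts_shifted_tendsto[OF p D True] show ?thesis by (rule Lim_transform_eventually)
  qed (use p in \<open>simp add: shifted_deg_def MD_def\<close>)
  with T that show ?thesis by blast
qed

lemma entropy_emp_deg_le_eventually:
  assumes D: "D \<ge> 1" and e: "e > 0"
  shows "eventually (\<lambda>N. \<forall>T\<in>trees N D. entropy D (emp_deg D N T) \<le> entropy D (shifted_deg D N T) + e)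
           sequentially"
proof -
  obtain d where d: "d > 0"
    and close: "\<And>u v. (\<And>k. k \<le> D \<Longrightarrow> u k \<in> {0..1} \<and> v k \<in> {0..1} \<and> \<bar>u k - v k\<bar> < d)
                  \<Longrightarrow> entropy D u \<le> entropy D v + e"
    using entropy_uniformly_continuous[OF e] by blast
  have "((\<lambda>N::nat. 1 / real N) \<longlongrightarrow> 0) sequentially" by real_asymp
  then have "eventually (\<lambda>N::nat. 1 / real N < d) sequentially" using d by (rule order_tendstoD)
  then show ?thesis
  proof (rule eventually_mono, intro ballI close)
    fix N T k assume N: "1 / real N < d" and T: "T \<in> trees N D" and k: "k \<le> D"
    show "emp_deg D N T k \<in> {0..1} \<and> shifted_deg D N T k \<in> {0..1}
        \<and> \<bar>emp_deg D N T k - shifted_deg D N T k\<bar> < d"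
      using emp_deg_in_cube[OF T] shifted_deg_in_MD[OF T D] k N abs_emp_deg_minus_shifted_deg_le[of D N T k]
      by (auto simp: cube_def MD_def)
  qed
qed

lemma tendsto_entropy_emp_deg:
  assumes T: "\<forall>N\<ge>1. T N \<in> trees N D"
    and lim: "\<And>k. ((\<lambda>N. shifted_deg D N (T N) k) \<longlongrightarrow> p k) sequentially" and p: "p \<in> MD D"
  shows "((\<lambda>N. entropy D (emp_deg D N (T N))) \<longlongrightarrow> entropy D p) sequentially"
proof (rule tendsto_entropy)
  fix k assume k: "k \<le> D"
  have "((\<lambda>N::nat. 1 / real N) \<longlongrightarrow> 0) sequentially" by real_asymp
  then have "((\<lambda>N. shifted_deg D N (T N) k - emp_deg D N (T N) k) \<longlongrightarrow> 0) sequentially"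
    using k by (simp add: shifted_deg_minus_emp_deg tendsto_mult_right_zero divide_inverse
        flip: inverse_eq_divide)
  from tendsto_diff[OF lim[of k] this] show "((\<lambda>N. emp_deg D N (T N) k) \<longlongrightarrow> p k) sequentially" by simp
  show "eventually (\<lambda>N. emp_deg D N (T N) k \<in> {0..1}) sequentially"
    using emp_deg_in_cube T k by (intro eventually_sequentiallyI[of 1]) (force simp: cube_def)
  show "p k \<in> {0..1}" using p k by (simp add: MD_def)
qed

definition max_entropy :: "nat \<Rightarrow> real" where
  "max_entropy D = (SUP q\<in>MD D. entropy D q)"

lemma MD_nonempty: "D \<ge> 1 \<Longrightarrow> MD D \<noteq> {}"
proof -
  assume "D \<ge> 1"
  then have "(\<lambda>k::nat. if k = 1 then 1 else 0 :: real) \<in> MD D"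
    by (auto simp: MD_def if_distrib sum.delta' cong: if_cong)
  then show ?thesis by blast
qed

lemma bdd_above_entropy_MD: "bdd_above (entropy D ` MD D)"
  by (rule bdd_aboveI2[of _ _ "real (D + 1)"], rule entropy_le) (auto simp: MD_def)

lemma entropy_le_max_entropy: "q \<in> MD D \<Longrightarrow> entropy D q \<le> max_entropy D"
  unfolding max_entropy_def by (rule cSUP_upper[OF _ bdd_above_entropy_MD])

lemma exists_entropy_gt_max_entropy_minus:
  assumes "D \<ge> 1" and "e > 0"
  obtains q where "q \<in> MD D" and "max_entropy D - e < entropy D q"
  using less_cSUP_iff[OF MD_nonempty[OF assms(1)] bdd_above_entropy_MD, of "max_entropy D - e"] assms(2)
  unfolding max_entropy_def by auto

lemma Ifun_eq_max_entropy_minus_entropy: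
  assumes D: "D \<ge> 1"
  shows "Ifun a b D p = max_entropy D - entropy D p"
proof -
  define c where "c = ln (1 / a) + ln (1 / b)"
  have J: "Jfun a b D q = c - entropy D q" for q by (simp add: Jfun_def entropy_def c_def)
  have bdd: "bdd_below (Jfun a b D ` MD D)"
    using entropy_le_max_entropy by (intro bdd_belowI2[of _ "c - max_entropy D"]) (simp add: J)
  have "(INF q\<in>MD D. Jfun a b D q) = c - max_entropy D"
  proof (rule order.antisym)
    have "entropy D q \<le> c - (INF q\<in>MD D. Jfun a b D q)" if "q \<in> MD D" for q
      using cINF_lower[OF bdd that] by (simp add: J)
    then have "max_entropy D \<le> c - (INF q\<in>MD D. Jfun a b D q)"
      unfolding max_entropy_def by (intro cSUP_least MD_nonempty[OF D])
    then show "(INF q\<in>MD D. Jfun a b D q) \<le> c - max_entropy D" by simp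
    show "c - max_entropy D \<le> (INF q\<in>MD D. Jfun a b D q)"
      using entropy_le_max_entropy by (intro cINF_greatest MD_nonempty[OF D]) (simp add: J)
  qed
  then show ?thesis by (simp add: Ifun_def J)
qed

section \<open>Large deviation bounds for the shifted degree vector\<close>

lemma tendsto_fun_componentwise:
  fixes f :: "'a \<Rightarrow> 'i \<Rightarrow> real"
  assumes "\<And>i. ((\<lambda>n. f n i) \<longlongrightarrow> l i) F"
  shows "(f \<longlongrightarrow> l) F"
proof -
  have "limitin (product_topology (\<lambda>i. euclidean) UNIV) f l F"
    using assms by (subst limitin_componentwise) auto
  then show ?thesis by (simp add: euclidean_product_topology)
qed

lemma shifted_deg_degree_class:
  assumes "T \<in> trees N D" and "t \<in> trees_of_degrees (mset (degree_word T))"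
  shows "shifted_deg D N t = shifted_deg D N T"
  unfolding shifted_deg_def trees_of_degrees_subset_trees(2)[OF assms] ..

lemma scaled_eln_card_ratio:
  assumes "N \<ge> 1" and "0 < card S" and "0 < card T"
  shows "ereal (1 / real N) * eln (real (card S) / real (card T))
    = ereal ((ln (real (card S)) - ln (real (card T))) / real N)"
  using assms by (simp add: eln_def ln_div)

lemma ln_card_ge_eventually:
  assumes D: "D \<ge> 1" and p: "p \<in> MD D" and e: "e > 0"
    and T: "\<forall>N\<ge>1. T N \<in> trees N D"
    and lim: "\<And>k. ((\<lambda>N. shifted_deg D N (T N) k) \<longlongrightarrow> p k) sequentially"
  shows "eventually (\<lambda>N. \<forall>S. finite S \<and> trees_of_degrees (mset (degree_word (T N))) \<subseteq> S
           \<longrightarrow> real N * (entropy D p - e) \<le> ln (real (card S))) sequentially"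
proof -
  have "eventually (\<lambda>N. entropy D (emp_deg D N (T N)) > entropy D p - e / 2) sequentially"
    using tendsto_entropy_emp_deg[OF T lim p] e by (intro order_tendstoD) auto
  moreover have "eventually (\<lambda>N. types_slack D N / real N < e / 2) sequentially"
    using types_slack_over_N_tendsto e by (intro order_tendstoD) auto
  moreover note eventually_ge_at_top[of "1::nat"]
  ultimately show ?thesis
  proof eventually_elim
    case (elim N)
    show ?case
    proof (intro allI impI)
      fix S assume S: "finite S \<and> trees_of_degrees (mset (degree_word (T N))) \<subseteq> S"
      from elim have N: "real N > 0" by simp
      have "real N * (entropy D p - e / 2) \<le> real N * entropy D (emp_deg D N (T N))"
        using elim N by (intro mult_left_mono) auto
      moreover have "types_slack D N \<le> real N * e / 2"
        using elim N by (simp add: field_simps)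
      ultimately have "real N * (entropy D p - e) \<le> real N * entropy D (emp_deg D N (T N)) - types_slack D N"
        by (simp add: algebra_simps)
      also have "\<dots> \<le> ln (real (card S))"
        using S elim T by (intro entropy_le_ln_card) auto
      finally show "real N * (entropy D p - e) \<le> ln (real (card S))" .
    qed
  qed
qed

lemma ln_card_le_eventually:
  assumes D: "D \<ge> 1" and e: "e > 0"
  shows "eventually (\<lambda>N. \<forall>h S. S \<subseteq> trees N D \<and> S \<noteq> {} \<and> (\<forall>t\<in>S. entropy D (shifted_deg D N t) \<le> h)
           \<longrightarrow> ln (real (card S)) \<le> real N * (h + e)) sequentially"
  using entropy_emp_deg_le_eventually[OF D half_gt_zero[OF e]]
    order_tendstoD(2)[OF types_slack_over_N_tendsto[of D] half_gt_zero[OF e]] eventually_ge_at_top[of "1::nat"]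
proof eventually_elim
  case (elim N)
  then have N: "real N > 0" by simp
  show ?case
  proof (intro allI impI)
    fix h S assume S: "S \<subseteq> trees N D \<and> S \<noteq> {} \<and> (\<forall>t\<in>S. entropy D (shifted_deg D N t) \<le> h)"
    have "types_slack D N \<le> real N * e / 2"
      using elim N by (simp add: field_simps)
    have "ln (real (card S)) \<le> real N * (h + e / 2) + types_slack D N"
      using S elim by (intro ln_card_le_entropy) force+
    also have "\<dots> \<le> real N * (h + e)"
      using \<open>types_slack D N \<le> _\<close> by (simp add: algebra_simps)
    finally show "ln (real (card S)) \<le> real N * (h + e)" .
  qed
qed

lemma ldp_upper_eventually:
  assumes D: "D \<ge> 1" and C: "\<forall>q\<in>C. entropy D q \<le> h" and e: "e > 0"
  shows "eventually (\<lambda>N. ereal (1 / real N) *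
           eln (real (card {T\<in>trees N D. shifted_deg D N T \<in> C}) / real (card (trees N D)))
           \<le> ereal (h - max_entropy D + e)) sequentially"
proof -
  obtain q where q: "q \<in> MD D" "max_entropy D - e / 3 < entropy D q"
    using exists_entropy_gt_max_entropy_minus[OF D, of "e / 3"] e by auto
  obtain T where T: "\<forall>N\<ge>1. T N \<in> trees N D"
    and lim: "\<And>k. ((\<lambda>N. shifted_deg D N (T N) k) \<longlongrightarrow> q k) sequentially"
    using exists_trees_shifted_deg_tendsto[OF D q(1)] by blast
  have e3: "e / 3 > 0" using e by simp
  note lower = ln_card_ge_eventually[OF D q(1) e3 T lim]
  note upper = ln_card_le_eventually[OF D e3]
  show ?thesis using lower upper eventually_ge_at_top[of "1::nat"]
  proof eventually_elim
    case (elim N)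
    define S where "S = {T\<in>trees N D. shifted_deg D N T \<in> C}"
    have TN: "T N \<in> trees N D" using T elim(3) by blast
    have card_trees: "0 < card (trees N D)" using TN by (auto simp: card_gt_0_iff finite_trees)
    have "real N * (entropy D q - e / 3) \<le> ln (real (card (trees N D)))"
      by (rule elim(1)[rule_format]) (use finite_trees trees_of_degrees_subset_trees(1)[OF TN] in blast)
    show ?case
    proof (cases "S = {}")
      case False
      then have card_S: "0 < card S" by (simp add: S_def card_gt_0_iff finite_trees)
      have "ln (real (card S)) \<le> real N * (h + e / 3)"
        by (rule elim(2)[rule_format]) (use False C in \<open>auto simp: S_def\<close>)
      moreover have "real N * (max_entropy D - e / 3) \<le> real N * entropy D q"
        using q(2) by (intro mult_left_mono) auto
      ultimately have "ln (real (card S)) - ln (real (card (trees N D))) \<le> real N * (h - max_entropy D + e)"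
        using \<open>real N * _ \<le> ln (real (card (trees N D)))\<close> by (simp add: algebra_simps; linarith)
      then have "(ln (real (card S)) - ln (real (card (trees N D)))) / real N \<le> h - max_entropy D + e"
        using elim(3) by (simp add: pos_divide_le_eq mult.commute)
      then show ?thesis
        using scaled_eln_card_ratio[OF elim(3) card_S card_trees] by (simp add: S_def)
    next
      case True
      then have "card S = 0" by simp
      then show ?thesis using elim(3) by (simp add: S_def eln_def)
    qed
  qed
qed

lemma ldp_lower_eventually:
  assumes D: "D \<ge> 1" and p: "p \<in> MD D" and V: "open V" "p \<in> V" and e: "e > 0"
  shows "eventually (\<lambda>N. ereal (entropy D p - max_entropy D - e) \<le> ereal (1 / real N) *
           eln (real (card {T\<in>trees N D. shifted_deg D N T \<in> MD D \<inter> V}) / real (card (trees N D))))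
           sequentially"
proof -
  obtain T where T: "\<forall>N\<ge>1. T N \<in> trees N D"
    and lim: "\<And>k. ((\<lambda>N. shifted_deg D N (T N) k) \<longlongrightarrow> p k) sequentially"
    using exists_trees_shifted_deg_tendsto[OF D p] by blast
  have "((\<lambda>N. shifted_deg D N (T N)) \<longlongrightarrow> p) sequentially"
    by (rule tendsto_fun_componentwise) (rule lim)
  then have in_V: "eventually (\<lambda>N. shifted_deg D N (T N) \<in> V) sequentially"
    using V topological_tendstoD by blast
  note lower = ln_card_ge_eventually[OF D p half_gt_zero[OF e] T lim]
  note upper = ln_card_le_eventually[OF D half_gt_zero[OF e]]
  show ?thesis using in_V lower upper eventually_ge_at_top[of "1::nat"]
  proof eventually_elim
    case (elim N)
    define S where "S = {T\<in>trees N D. shifted_deg D N T \<in> MD D \<inter> V}"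
    have TN: "T N \<in> trees N D" using T elim(4) by blast
    have card_trees: "0 < card (trees N D)" using TN by (auto simp: card_gt_0_iff finite_trees)
    have fin_S: "finite S" using finite_trees by (simp add: S_def)
    have degree_class: "trees_of_degrees (mset (degree_word (T N))) \<subseteq> S"
      using elim(1) shifted_deg_in_MD[OF TN D] trees_of_degrees_subset_trees(1)[OF TN]
        shifted_deg_degree_class[OF TN] by (auto simp: S_def)
    then have card_S: "0 < card S"
      using card_degree_class_pos[OF TN] card_mono[OF fin_S degree_class] by linarith
    have "real N * (entropy D p - e / 2) \<le> ln (real (card S))"
      by (rule elim(2)[rule_format]) (use fin_S degree_class in blast)
    moreover have "ln (real (card (trees N D))) \<le> real N * (max_entropy D + e / 2)"
      by (rule elim(3)[rule_format]) (use TN entropy_le_max_entropy shifted_deg_in_MD[OF _ D] in blast)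
    ultimately have "real N * (entropy D p - max_entropy D - e) \<le> ln (real (card S)) - ln (real (card (trees N D)))"
      by (simp add: algebra_simps; linarith)
    then have "entropy D p - max_entropy D - e \<le> (ln (real (card S)) - ln (real (card (trees N D)))) / real N"
      using elim(4) by (simp add: pos_le_divide_eq mult.commute)
    then show ?case
      using scaled_eln_card_ratio[OF elim(4) card_S card_trees] by (simp add: S_def)
  qed
qed

lemma limsup_le_of_eventually_le:
  fixes f :: "nat \<Rightarrow> ereal"
  assumes "\<And>e. e > 0 \<Longrightarrow> eventually (\<lambda>N. f N \<le> ereal (c + e)) sequentially"
  shows "limsup f \<le> ereal c"
proof (rule ereal_le_epsilon2)
  fix e :: real assume "e > 0"
  then have "limsup f \<le> ereal (c + e)" by (intro Limsup_bounded assms)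
  then show "limsup f \<le> ereal c + ereal e" by simp
qed

lemma liminf_ge_of_eventually_ge:
  fixes f :: "nat \<Rightarrow> ereal"
  assumes "\<And>e. e > 0 \<Longrightarrow> eventually (\<lambda>N. ereal (c - e) \<le> f N) sequentially"
  shows "ereal c \<le> liminf f"
proof (rule ereal_le_epsilon2)
  fix e :: real assume "e > 0"
  then have "ereal (c - e) \<le> liminf f" by (intro Liminf_bounded assms)
  then show "ereal c \<le> liminf f + ereal e" by (cases "liminf f") auto
qed

section \<open>The coupling\<close>

definition coupling :: "nat \<Rightarrow> nat \<Rightarrow> ((nat \<Rightarrow> real) \<times> (nat \<Rightarrow> real)) measure" where
  "coupling D N = distr (measure_pmf (pmf_of_set (trees N D))) borel
     (\<lambda>T. (emp_deg D N T, shifted_deg D N T))"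

lemma prob_space_coupling: "prob_space (coupling D N)"
  unfolding coupling_def by (intro prob_space.prob_space_distr prob_space_measure_pmf) simp

lemma sets_coupling: "sets (coupling D N) = sets borel"
  by (simp add: coupling_def)

lemma borel_measurable_fst_snd:
  "fst \<in> borel_measurable (borel :: ('a::topological_space \<times> 'b::topological_space) measure)"
  "snd \<in> borel_measurable (borel :: ('a::topological_space \<times> 'b::topological_space) measure)"
  by (intro borel_measurable_continuous_onI continuous_on_fst continuous_on_snd continuous_on_id)+

lemma distr_fst_coupling: "distr (coupling D N) borel fst = PN D N"
  unfolding coupling_def PN_def
  by (subst distr_distr[OF borel_measurable_fst_snd(1)]) (simp_all add: o_def)

lemma measure_snd_coupling:
  assumes "trees N D \<noteq> {}" and "X \<in> sets borel"
  shows "measure (distr (coupling D N) borel snd) X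
    = real (card {T\<in>trees N D. shifted_deg D N T \<in> X}) / real (card (trees N D))"
proof -
  have "measure (distr (coupling D N) borel snd) X
      = measure (measure_pmf (pmf_of_set (trees N D))) (shifted_deg D N -` X)"
    unfolding coupling_def using assms(2)
    by (subst distr_distr[OF borel_measurable_fst_snd(2)]) (simp_all add: o_def measure_distr)
  also have "\<dots> = real (card (trees N D \<inter> shifted_deg D N -` X)) / real (card (trees N D))"
    by (rule measure_pmf_of_set[OF assms(1) finite_trees])
  also have "trees N D \<inter> shifted_deg D N -` X = {T\<in>trees N D. shifted_deg D N T \<in> X}" by auto
  finally show ?thesis .
qed

lemma emeasure_coupling_eq_0:
  assumes "trees N D \<noteq> {}" and "X \<in> sets borel"
    and "\<And>T. T \<in> trees N D \<Longrightarrow> (emp_deg D N T, shifted_deg D N T) \<notin> X"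
  shows "emeasure (coupling D N) X = 0"
proof -
  have "emeasure (coupling D N) X
      = emeasure (measure_pmf (pmf_of_set (trees N D))) ((\<lambda>T. (emp_deg D N T, shifted_deg D N T)) -` X)"
    unfolding coupling_def using assms(2) by (simp add: emeasure_distr)
  also have "\<dots> = 0"
  proof -
    have "trees N D \<inter> (\<lambda>T. (emp_deg D N T, shifted_deg D N T)) -` X = {}" using assms(3) by blast
    then show ?thesis by (simp add: emeasure_pmf_of_set[OF assms(1) finite_trees])
  qed
  finally show ?thesis .
qed

lemma closed_cube: "closed (cube D)"
proof -
  have "cube D = (\<Inter>k\<in>{..D}. {x. 0 \<le> x k} \<inter> {x. x k \<le> 1}) \<inter> (\<Inter>k\<in>{D<..}. {x. x k = 0})"
    by (auto simp: cube_def)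
  then show ?thesis
    by (simp only:) (intro closed_Int closed_INT ballI closed_Collect_le closed_Collect_eq
        continuous_on_product_coordinates continuous_on_const)
qed

lemma closed_MD: "closed (MD D)"
proof -
  have "MD D = cube D \<inter> {p. (\<Sum>k\<le>D. p k) = 1} \<inter> {p. (\<Sum>k=1..D. real k * p k) = 1}"
    by (auto simp: cube_def MD_def)
  then show ?thesis
    by (simp only:) (intro closed_Int closed_cube closed_Collect_eq continuous_on_sum
        continuous_on_mult continuous_on_product_coordinates continuous_on_const)
qed

lemma continuous_on_pair_coordinates:
  "continuous_on UNIV (\<lambda>z :: ('i \<Rightarrow> real) \<times> ('i \<Rightarrow> real). fst z k)"
  "continuous_on UNIV (\<lambda>z :: ('i \<Rightarrow> real) \<times> ('i \<Rightarrow> real). snd z k)"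
  using continuous_on_compose[OF continuous_on_fst[OF continuous_on_id]
      continuous_on_subset[OF continuous_on_product_coordinates[of k]]]
    continuous_on_compose[OF continuous_on_snd[OF continuous_on_id]
      continuous_on_subset[OF continuous_on_product_coordinates[of k]]]
  by (simp_all add: o_def)

lemma open_l1_dist_gt: "open {(x :: nat \<Rightarrow> real, y). c < (\<Sum>k\<le>D. \<bar>x k - y k\<bar>)}"
proof -
  have "{(x :: nat \<Rightarrow> real, y). c < (\<Sum>k\<le>D. \<bar>x k - y k\<bar>)} = {z. c < (\<Sum>k\<le>D. \<bar>fst z k - snd z k\<bar>)}"
    by auto
  then show ?thesis
    by (simp only:) (intro open_Collect_less continuous_on_const continuous_on_sum continuous_on_rabs
        continuous_on_diff continuous_on_pair_coordinates)
qed

lemma trees_nonempty: "D \<ge> 1 \<Longrightarrow> N \<ge> 1 \<Longrightarrow> trees N D \<noteq> {}"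
  using exists_trees_shifted_deg_tendsto MD_nonempty by (metis empty_iff ex_in_conv)

lemma ldp_upper_coupling:
  assumes D: "D \<ge> 1" and C: "C \<subseteq> MD D" "C \<in> sets borel"
  shows "limsup (\<lambda>N. ereal (1 / real N) * eln (measure (distr (coupling D N) borel snd) C))
    \<le> - (INF p\<in>C. ereal (max_entropy D - entropy D p))"
proof -
  let ?F = "\<lambda>N. ereal (1 / real N) * eln (measure (distr (coupling D N) borel snd) C)"
  let ?I = "INF p\<in>C. ereal (max_entropy D - entropy D p)"
  have F_eq: "eventually (\<lambda>N. ?F N = ereal (1 / real N) *
      eln (real (card {T\<in>trees N D. shifted_deg D N T \<in> C}) / real (card (trees N D)))) sequentially"
    using eventually_ge_at_top[of "1::nat"] by eventually_elim (simp add: measure_snd_coupling[OF trees_nonempty[OF D] C(2)])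
  have bound: "limsup ?F \<le> ereal (- r)" if r: "ereal r \<le> ?I" for r
  proof (rule limsup_le_of_eventually_le)
    fix e :: real assume e: "e > 0"
    have "\<forall>q\<in>C. entropy D q \<le> max_entropy D - r"
    proof
      fix q assume "q \<in> C"
      then have "r \<le> max_entropy D - entropy D q" using order.trans[OF r INF_lower] by simp
      then show "entropy D q \<le> max_entropy D - r" by linarith
    qed
    from F_eq ldp_upper_eventually[OF D this e]
    show "eventually (\<lambda>N. ?F N \<le> ereal (- r + e)) sequentially"
      by eventually_elim auto
  qed
  have "0 \<le> ?I" using C entropy_le_max_entropy by (intro INF_greatest) auto
  then show ?thesis
  proof (cases ?I)
    case (real r)
    then show ?thesis using bound[of r] by simp
  next
    case PInf
    then have "limsup ?F \<le> ereal B" for B using bound[of "- B"] by simp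
    then have "limsup ?F = - \<infinity>" by (rule ereal_bot)
    then show ?thesis by simp
  qed simp
qed

lemma ldp_lower_coupling:
  assumes D: "D \<ge> 1" and U: "openin (top_of_set (MD D)) U"
  shows "- (INF p\<in>U. ereal (max_entropy D - entropy D p))
    \<le> liminf (\<lambda>N. ereal (1 / real N) * eln (measure (distr (coupling D N) borel snd) U))"
proof -
  obtain V where V: "open V" "U = MD D \<inter> V" using U by (auto simp: openin_open)
  let ?F = "\<lambda>N. ereal (1 / real N) * eln (measure (distr (coupling D N) borel snd) U)"
  have U_borel: "U \<in> sets borel" using V closed_MD by (simp add: sets.Int borel_closed borel_open)
  have F_eq: "eventually (\<lambda>N. ?F N = ereal (1 / real N) *
      eln (real (card {T\<in>trees N D. shifted_deg D N T \<in> U}) / real (card (trees N D)))) sequentially"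
    using eventually_ge_at_top[of "1::nat"]
    by eventually_elim (simp add: measure_snd_coupling[OF trees_nonempty[OF D] U_borel])
  have "- liminf ?F \<le> ereal (max_entropy D - entropy D p)" if p: "p \<in> U" for p
  proof -
    have "ereal (entropy D p - max_entropy D) \<le> liminf ?F"
    proof (rule liminf_ge_of_eventually_ge)
      fix e :: real assume e: "e > 0"
      have "p \<in> MD D" "p \<in> V" using p V(2) by auto
      from F_eq ldp_lower_eventually[OF D this(1) V(1) this(2) e]
      show "eventually (\<lambda>N. ereal (entropy D p - max_entropy D - e) \<le> ?F N) sequentially"
        by eventually_elim (simp add: V(2))
    qed
    then show ?thesis by (simp add: ereal_uminus_le_reorder)
  qed
  then have "- liminf ?F \<le> (INF p\<in>U. ereal (max_entropy D - entropy D p))"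
    by (rule INF_greatest)
  then show ?thesis by (simp add: ereal_uminus_le_reorder)
qed

theorem theorem1:
  fixes D :: nat and lam1 mu1 piS :: real
  assumes "D \<ge> 2" and "0 < lam1" and "lam1 < mu1" and "0 < piS" and "piS \<le> 1"
  defines "a \<equiv> param_a lam1 mu1 piS" and "b \<equiv> param_b lam1 mu1 piS"
  shows "\<exists>Q :: nat \<Rightarrow> ((nat \<Rightarrow> real) \<times> (nat \<Rightarrow> real)) measure.
     (\<forall>N. trees N D \<noteq> {} \<longrightarrow>
        prob_space (Q N) \<and> sets (Q N) = sets borel \<and>
        emeasure (Q N) (UNIV - cube D \<times> MD D) = 0 \<and>
        distr (Q N) borel fst = PN D N \<and>
        emeasure (Q N) {(x, y). (\<Sum>k\<le>D. \<bar>x k - y k\<bar>) > 2 / real N} = 0) \<and>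
     (\<forall>C. closedin (top_of_set (MD D)) C \<longrightarrow>
        limsup (\<lambda>N. ereal (1 / real N) * eln (measure (distr (Q N) borel snd) C))
          \<le> - (INF p\<in>C. ereal (Ifun a b D p))) \<and>
     (\<forall>U. openin (top_of_set (MD D)) U \<longrightarrow>
        liminf (\<lambda>N. ereal (1 / real N) * eln (measure (distr (Q N) borel snd) U))
          \<ge> - (INF p\<in>U. ereal (Ifun a b D p)))"
proof -
  have D: "D \<ge> 1" using assms(1) by simp
  show ?thesis
  proof (intro exI[of _ "coupling D"] conjI allI impI)
    fix N assume ne: "trees N D \<noteq> {}"
    show "prob_space (coupling D N)" "sets (coupling D N) = sets borel"
      "distr (coupling D N) borel fst = PN D N"
      by (simp_all add: prob_space_coupling sets_coupling distr_fst_coupling)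
    show "emeasure (coupling D N) (UNIV - cube D \<times> MD D) = 0"
      using emp_deg_in_cube shifted_deg_in_MD[OF _ D]
      by (intro emeasure_coupling_eq_0 ne borel_open open_Diff closed_Times closed_cube closed_MD) auto
    show "emeasure (coupling D N) {(x, y). (\<Sum>k\<le>D. \<bar>x k - y k\<bar>) > 2 / real N} = 0"
      using l1_dist_emp_deg_shifted_deg[OF D]
      by (intro emeasure_coupling_eq_0 ne borel_open open_l1_dist_gt) auto
  next
    fix C assume C: "closedin (top_of_set (MD D)) C"
    then have "C \<subseteq> MD D" and "C \<in> sets borel"
      using closedin_subset[OF C] closedin_closed_trans[OF C closed_MD] by auto
    then show "limsup (\<lambda>N. ereal (1 / real N) * eln (measure (distr (coupling D N) borel snd) C))
        \<le> - (INF p\<in>C. ereal (Ifun a b D p))"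
      using ldp_upper_coupling[OF D] by (simp add: Ifun_eq_max_entropy_minus_entropy[OF D])
  next
    fix U assume "openin (top_of_set (MD D)) U"
    then show "- (INF p\<in>U. ereal (Ifun a b D p))
        \<le> liminf (\<lambda>N. ereal (1 / real N) * eln (measure (distr (coupling D N) borel snd) U))"
      using ldp_lower_coupling[OF D] by (simp add: Ifun_eq_max_entropy_minus_entropy[OF D])
  qed
qed

end
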